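(* Let $(u_\varepsilon)$ be a family (indexed by $\varepsilon\to0$) in $L^2_\sharp[Y,H^1(\Omega)]$ such that, for some $(u_0,\mathbf{v})\in[L^2(\Omega\times Y)]^{N+1}$ (extended $Y$-periodically in $y$), $$u_\varepsilon\twoheadrightarrow u_0\text{ weakly in }L^2_\sharp[Y,L^2(\Omega)]\quad\text{and}\quad \varepsilon\nabla_x u_\varepsilon\twoheadrightarrow\mathbf{v}\text{ weakly in }L^2_\sharp[Y,L^2(\Omega)]^N.$$ Then $\mathbf{v}=\nabla_y u_0$.
   Context: Let $N\ge1$, $Y=[0,1]^N$, $\Omega\subseteq\mathbb{R}^N$ open. $L^2_\sharp[Y,L^2(\Omega)]$ is the Hilbert space of measurable functions on $\Omega\times\mathbb{R}^N$ that are $\mathbb{Z}^N$-periodic in the second variable and square integrable on $\Omega\times Y$; $L^2_\sharp[Y,H^1(\Omega)]$ is the subspace of those $u$ with distributional partial gradient $\nabla_x u\in L^2_\sharp[Y,L^2(\Omega)]^N$. For $\varepsilon>0$, $\mathcal{F}_\varepsilon(u)(x,y):=u(x,y-x/\varepsilon)$; $u_\varepsilon\twoheadrightarrow u_0$ weakly means $\mathcal{F}_\varepsilon(u_\varepsilon)\rightharpoonup u_0$ weakly in $L^2_\sharp[Y,L^2(\Omega)]$ as $\varepsilon\to0$ (componentwise for vectors). $\nabla_y u_0$ is the distributional gradient in the $y$ variable. *)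

theory Defs
  imports "HOL-Analysis.Analysis"
begin

text \<open>Points of \<Omega> \<times> R^N are pairs (x,y) of the product type 'a \<times> 'a, 'a an N-dimensional
  Euclidean space.  The reference cell is Y = [0,1]^N = cbox 0 One.\<close>

definition unit_cell :: "'a::euclidean_space set" where
  "unit_cell = cbox 0 One"

definition int_lattice :: "'a::euclidean_space set" where
  "int_lattice = {k. \<forall>b\<in>Basis. k \<bullet> b \<in> \<int>}"

definition L2_per :: "'a::euclidean_space set \<Rightarrow> ('a \<times> 'a \<Rightarrow> real) set" where
  "L2_per \<Omega> = {u. u \<in> borel_measurable (lebesgue_on (\<Omega> \<times> UNIV))
      \<and> (\<forall>x\<in>\<Omega>. \<forall>y. \<forall>k\<in>int_lattice. u (x, y + k) = u (x, y))
      \<and> integrable (lebesgue_on (\<Omega> \<times> unit_cell)) (\<lambda>z. (u z)\<^sup>2)}"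

definition L2_per_inner :: "'a::euclidean_space set \<Rightarrow> ('a \<times> 'a \<Rightarrow> real) \<Rightarrow> ('a \<times> 'a \<Rightarrow> real) \<Rightarrow> real" where
  "L2_per_inner \<Omega> u w = integral\<^sup>L (lebesgue_on (\<Omega> \<times> unit_cell)) (\<lambda>z. u z * w z)"

definition L2_per_weak_conv :: "'a::euclidean_space set \<Rightarrow> (nat \<Rightarrow> 'a \<times> 'a \<Rightarrow> real) \<Rightarrow> ('a \<times> 'a \<Rightarrow> real) \<Rightarrow> bool" where
  "L2_per_weak_conv \<Omega> f g \<longleftrightarrow> (\<forall>n. f n \<in> L2_per \<Omega>) \<and> g \<in> L2_per \<Omega>
     \<and> (\<forall>w\<in>L2_per \<Omega>. (\<lambda>n. L2_per_inner \<Omega> (f n) w) \<longlonglongrightarrow> L2_per_inner \<Omega> g w)"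

definition F_eps :: "real \<Rightarrow> ('a::euclidean_space \<times> 'a \<Rightarrow> 'b) \<Rightarrow> 'a \<times> 'a \<Rightarrow> 'b" where
  "F_eps \<epsilon> u = (\<lambda>(x, y). u (x, y - x /\<^sub>R \<epsilon>))"

coinductive smooth_fun :: "('a::euclidean_space \<Rightarrow> real) \<Rightarrow> bool" where
  "f differentiable_on UNIV \<Longrightarrow> continuous_on UNIV f
   \<Longrightarrow> (\<forall>v. smooth_fun (\<lambda>z. frechet_derivative f (at z) v)) \<Longrightarrow> smooth_fun f"

definition tsupp :: "('a::topological_space \<Rightarrow> real) \<Rightarrow> 'a set" where
  "tsupp \<phi> = closure {z. \<phi> z \<noteq> 0}"

definition test_fun :: "'a::euclidean_space set \<Rightarrow> ('a \<times> 'a \<Rightarrow> real) set" where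
  "test_fun \<Omega> = {\<phi>. smooth_fun \<phi> \<and> compact (tsupp \<phi>) \<and> tsupp \<phi> \<subseteq> \<Omega> \<times> UNIV}"

definition dx :: "'a::euclidean_space \<Rightarrow> ('a \<times> 'a \<Rightarrow> real) \<Rightarrow> 'a \<times> 'a \<Rightarrow> real" where
  "dx b \<phi> = (\<lambda>z. frechet_derivative \<phi> (at z) (b, 0))"

definition dy :: "'a::euclidean_space \<Rightarrow> ('a \<times> 'a \<Rightarrow> real) \<Rightarrow> 'a \<times> 'a \<Rightarrow> real" where
  "dy b \<phi> = (\<lambda>z. frechet_derivative \<phi> (at z) (0, b))"

definition is_grad_x :: "'a::euclidean_space set \<Rightarrow> ('a \<times> 'a \<Rightarrow> real) \<Rightarrow> ('a \<times> 'a \<Rightarrow> 'a) \<Rightarrow> bool" where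
  "is_grad_x \<Omega> u g \<longleftrightarrow> (\<forall>\<phi>\<in>test_fun \<Omega>. \<forall>b\<in>Basis.
      integral\<^sup>L (lebesgue_on (\<Omega> \<times> UNIV)) (\<lambda>z. u z * dx b \<phi> z)
      = - integral\<^sup>L (lebesgue_on (\<Omega> \<times> UNIV)) (\<lambda>z. (g z \<bullet> b) * \<phi> z))"

definition is_grad_y :: "'a::euclidean_space set \<Rightarrow> ('a \<times> 'a \<Rightarrow> real) \<Rightarrow> ('a \<times> 'a \<Rightarrow> 'a) \<Rightarrow> bool" where
  "is_grad_y \<Omega> u g \<longleftrightarrow> (\<forall>\<phi>\<in>test_fun \<Omega>. \<forall>b\<in>Basis.
      integral\<^sup>L (lebesgue_on (\<Omega> \<times> UNIV)) (\<lambda>z. u z * dy b \<phi> z)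
      = - integral\<^sup>L (lebesgue_on (\<Omega> \<times> UNIV)) (\<lambda>z. (g z \<bullet> b) * \<phi> z))"

definition H1_per :: "'a::euclidean_space set \<Rightarrow> ('a \<times> 'a \<Rightarrow> real) set" where
  "H1_per \<Omega> = {u. u \<in> L2_per \<Omega> \<and> (\<exists>g. (\<forall>b\<in>Basis. (\<lambda>z. g z \<bullet> b) \<in> L2_per \<Omega>) \<and> is_grad_x \<Omega> u g)}"

end

theory Submission
  imports Defs
begin

text \<open>The shear S(x,y) = (x, y + x/\<epsilon>) preserves
  Lebesgue measure and F_\<epsilon> u \<circ> S = u.  Testing the weak gradient \<nabla>_x u_\<epsilon> against \<phi> \<circ> S,
  whose x-derivative is \<partial>_x\<phi> \<circ> S + (1/\<epsilon>) \<partial>_y\<phi> \<circ> S, and changing variables back gives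
  \<epsilon> \<integral> F_\<epsilon> u_\<epsilon> \<partial>_x\<phi> + \<integral> F_\<epsilon> u_\<epsilon> \<partial>_y\<phi> = - \<integral> F_\<epsilon>(\<epsilon> \<partial>_x u_\<epsilon>) \<phi>.
  Each integral over \<Omega> \<times> R^N of a Y-periodic function against a continuous compactly supported
  function is an L^2_\<sharp> inner product with the Y-periodisation of the latter, so weak convergence
  lets \<epsilon> \<rightarrow> 0 and leaves \<integral> u_0 \<partial>_y\<phi> = - \<integral> v_b \<phi>.\<close>

section \<open>Measure-preserving maps\<close>

lemma measure_preserving_lebesgue:
  fixes T :: "'a::euclidean_space \<Rightarrow> 'a"
  assumes [measurable]: "T \<in> borel \<rightarrow>\<^sub>M borel" and preserving: "distr lborel borel T = lborel"
  shows "T \<in> lebesgue \<rightarrow>\<^sub>M lebesgue" "distr lebesgue lebesgue T = lebesgue"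
proof -
  have "distr lebesgue lborel T = distr lborel lborel T"
    by (rule distr_completion) simp
  also have "\<dots> = lborel"
    using preserving by (simp cong: distr_cong)
  finally have null_eq: "null_sets lborel = null_sets (distr lebesgue lborel T)"
    by simp
  show "T \<in> lebesgue \<rightarrow>\<^sub>M lebesgue"
    by (simp add: completion.measurable_completion2 null_eq measurable_completion)
  have "lebesgue = completion (distr lborel borel T)"
    using preserving by simp
  also have "\<dots> = completion (distr lebesgue lborel T)"
    by (simp add: distr_completion cong: distr_cong)
  also have "\<dots> = distr lebesgue lebesgue T"
    by (subst completion.completion_distr_eq) (auto simp: null_eq measurable_completion)
  finally show "distr lebesgue lebesgue T = lebesgue" by simp
qed

lemma integral_lebesgue_on_measure_preserving:
  fixes T :: "'a::euclidean_space \<Rightarrow> 'a" and g :: "'a \<Rightarrow> real"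
  assumes "T \<in> borel \<rightarrow>\<^sub>M borel" and "distr lborel borel T = lborel"
    and A: "A \<in> sets lebesgue" and T_A: "\<And>z. T z \<in> A \<longleftrightarrow> z \<in> A"
    and g: "g \<in> borel_measurable (lebesgue_on A)"
  shows "integrable (lebesgue_on A) (\<lambda>z. g (T z)) \<longleftrightarrow> integrable (lebesgue_on A) g"
    and "integral\<^sup>L (lebesgue_on A) (\<lambda>z. g (T z)) = integral\<^sup>L (lebesgue_on A) g"
proof -
  note T = measure_preserving_lebesgue[OF assms(1,2)]
  have A': "A \<inter> space lebesgue \<in> sets lebesgue" using A by simp
  let ?g = "\<lambda>w. indicator A w *\<^sub>R g w"
  have g': "?g \<in> borel_measurable lebesgue"
    using g by (simp add: borel_measurable_restrict_space_iff[OF A'])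
  have compose: "(\<lambda>z. indicator A z *\<^sub>R g (T z)) = (\<lambda>z. ?g (T z))"
    using T_A by (simp add: indicator_def)
  show "integrable (lebesgue_on A) (\<lambda>z. g (T z)) \<longleftrightarrow> integrable (lebesgue_on A) g"
    unfolding integrable_restrict_space[OF A'] compose
    using integrable_distr_eq[OF T(1) g'] T(2) by simp
  show "integral\<^sup>L (lebesgue_on A) (\<lambda>z. g (T z)) = integral\<^sup>L (lebesgue_on A) g"
    unfolding integral_restrict_space[OF A'] compose
    using integral_distr[OF T(1) g'] T(2) by simp
qed

lemma lborel_distr_translate: "distr lborel borel (\<lambda>z. z + c) = (lborel :: 'a::euclidean_space measure)"
proof -
  have "(\<lambda>z. z + c) = (+) c" by (rule ext) (simp add: add.commute)
  then show ?thesis using lborel_distr_plus[of c] by (simp only:)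
qed

definition shear :: "real \<Rightarrow> 'a::euclidean_space \<times> 'a \<Rightarrow> 'a \<times> 'a" where
  "shear c z = (fst z, snd z + c *\<^sub>R fst z)"

lemma linear_shear: "linear (shear c)"
  by (rule linearI) (simp_all add: shear_def algebra_simps)

lemma shear_shear_uminus [simp]: "shear (-c) (shear c z) = z" "shear c (shear (-c) z) = z"
  by (simp_all add: shear_def)

lemma continuous_on_shear: "continuous_on UNIV (shear c)"
  unfolding shear_def by (intro continuous_intros)

lemma borel_measurable_shear: "shear c \<in> borel \<rightarrow>\<^sub>M borel"
  by (rule borel_measurable_continuous_onI[OF continuous_on_shear])

text \<open>Fubini: on each fibre {x} \<times> R^N the shear is a translation.\<close>
lemma lborel_distr_shear: "distr lborel borel (shear c) = (lborel :: ('a::euclidean_space \<times> 'a) measure)"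
proof (rule measure_eqI)
  fix A :: "('a \<times> 'a) set"
  assume "A \<in> sets (distr lborel borel (shear c))"
  then have A_borel: "A \<in> sets borel" by simp
  have sets_pair: "sets (lborel \<Otimes>\<^sub>M lborel) = (sets borel :: ('a \<times> 'a) set set)"
    by (simp only: lborel_prod sets_lborel)
  have A: "A \<in> sets (lborel \<Otimes>\<^sub>M lborel)" unfolding sets_pair by (rule A_borel)
  have A_shear: "shear c -` A \<in> sets (lborel \<Otimes>\<^sub>M lborel)"
    using measurable_sets[OF borel_measurable_shear A_borel] unfolding sets_pair by simp
  have fibre: "emeasure lborel (Pair x -` (shear c -` A)) = emeasure lborel (Pair x -` A)" for x :: 'a
  proof -
    have "Pair x -` (shear c -` A) = (+) (c *\<^sub>R x) -` (Pair x -` A)"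
      by (auto simp: shear_def add.commute)
    moreover have "Pair x -` A \<in> sets borel"
      using sets_Pair1[OF A] by simp
    then have "emeasure (distr lborel borel ((+) (c *\<^sub>R x))) (Pair x -` A)
        = emeasure lborel ((+) (c *\<^sub>R x) -` (Pair x -` A))"
      by (simp add: emeasure_distr)
    ultimately show ?thesis
      by (simp only: lborel_distr_plus)
  qed
  have "emeasure (distr lborel borel (shear c)) A = emeasure (lborel \<Otimes>\<^sub>M lborel) (shear c -` A)"
    using A_borel by (simp add: emeasure_distr borel_measurable_shear lborel_prod)
  also have "\<dots> = (\<integral>\<^sup>+x. emeasure lborel (Pair x -` A) \<partial>lborel)"
    unfolding lborel.emeasure_pair_measure_alt[OF A_shear] fibre ..
  also have "\<dots> = emeasure (lborel \<Otimes>\<^sub>M lborel) A"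
    by (rule lborel.emeasure_pair_measure_alt[OF A, symmetric])
  also have "\<dots> = emeasure lborel A"
    by (simp only: lborel_prod)
  finally show "emeasure (distr lborel borel (shear c)) A = emeasure lborel A" .
qed simp

section \<open>Smooth functions and test functions\<close>

lemma smooth_funD:
  assumes "smooth_fun f"
  shows "f differentiable_on UNIV" "continuous_on UNIV f"
    "\<And>v. smooth_fun (\<lambda>z. frechet_derivative f (at z) v)"
  using assms by (auto elim: smooth_fun.cases)

lemma smooth_fun_differentiable_at: "smooth_fun f \<Longrightarrow> f differentiable (at z)"
  using smooth_funD(1) by (metis differentiable_on_def UNIV_I at_within_open open_UNIV)

lemma continuous_on_frechet_derivative_smooth:
  "smooth_fun f \<Longrightarrow> continuous_on UNIV (\<lambda>z. frechet_derivative f (at z) v)"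
  using smooth_funD(2)[OF smooth_funD(3)] .

lemma frechet_derivative_compose_linear:
  fixes L :: "'b::euclidean_space \<Rightarrow> 'a::euclidean_space" and f :: "'a \<Rightarrow> real"
  assumes L: "linear L" and f: "f differentiable (at (L z))"
  shows "frechet_derivative (\<lambda>z. f (L z)) (at z) v = frechet_derivative f (at (L z)) (L v)"
proof -
  have L': "bounded_linear L" using L by (simp add: linear_conv_bounded_linear)
  have "frechet_derivative (f \<circ> L) (at z) = frechet_derivative f (at (L z)) \<circ> frechet_derivative L (at z)"
    using frechet_derivative_compose[OF bounded_linear_imp_differentiable[OF L'] f] .
  moreover have "frechet_derivative L (at z) = L"
    using L' by (metis frechet_derivative_at bounded_linear_imp_has_derivative)
  ultimately show ?thesis by (simp add: o_def)
qed

lemma smooth_fun_compose_linear: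
  fixes L :: "'b::euclidean_space \<Rightarrow> 'a::euclidean_space"
  assumes L: "linear L" and "smooth_fun f"
  shows "smooth_fun (\<lambda>z. f (L z))"
proof -
  have L': "bounded_linear L" using L by (simp add: linear_conv_bounded_linear)
  have "smooth_fun g" if "\<exists>f. g = (\<lambda>z. f (L z)) \<and> smooth_fun f" for g :: "'b \<Rightarrow> real"
    using that
  proof (coinduction arbitrary: g rule: smooth_fun.coinduct)
    case (smooth_fun g)
    then obtain f where g: "g = (\<lambda>z. f (L z))" and f: "smooth_fun f" by blast
    have g_diff: "g differentiable (at z)" for z
      unfolding g using differentiable_chain_at[OF bounded_linear_imp_differentiable[OF L']
          smooth_fun_differentiable_at[OF f]] by (simp add: o_def)
    have "frechet_derivative g (at z) v = frechet_derivative f (at (L z)) (L v)" for z v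
      unfolding g by (rule frechet_derivative_compose_linear[OF L smooth_fun_differentiable_at[OF f]])
    then have "\<exists>f'. (\<lambda>z. frechet_derivative g (at z) v) = (\<lambda>z. f' (L z)) \<and> smooth_fun f'" for v
      using smooth_funD(3)[OF f] by auto
    moreover have "g differentiable_on UNIV" "continuous_on UNIV g"
      using g_diff by (auto intro: differentiable_at_imp_differentiable_on differentiable_imp_continuous_on)
    ultimately show ?case by blast
  qed
  then show ?thesis using assms(2) by blast
qed

lemma notin_tsupp_imp_zero: "z \<notin> tsupp f \<Longrightarrow> f z = 0"
  unfolding tsupp_def using closure_subset[of "{z. f z \<noteq> 0}"] by auto

lemma tsupp_subset_closed: "closed S \<Longrightarrow> (\<And>z. f z \<noteq> 0 \<Longrightarrow> z \<in> S) \<Longrightarrow> tsupp f \<subseteq> S"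
  unfolding tsupp_def by (rule closure_minimal) auto

lemma frechet_derivative_notin_tsupp:
  assumes "z \<notin> tsupp f"
  shows "frechet_derivative f (at z) v = 0"
proof -
  have "open (- tsupp f)" unfolding tsupp_def by (intro open_Compl) simp
  moreover have "z \<in> - tsupp f" using assms by simp
  ultimately have "(f has_derivative (\<lambda>_. 0)) (at z)"
    by (rule has_derivative_transform_within_open[OF has_derivative_const[of 0]])
      (simp add: notin_tsupp_imp_zero)
  then have "frechet_derivative f (at z) = (\<lambda>_. 0)" by (rule frechet_derivative_at[symmetric])
  then show ?thesis by simp
qed

lemma tsupp_frechet_derivative: "tsupp (\<lambda>z. frechet_derivative f (at z) v) \<subseteq> tsupp f"
  by (rule tsupp_subset_closed) (auto simp: tsupp_def intro: frechet_derivative_notin_tsupp)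

lemma compact_subset_tsupp: "compact S \<Longrightarrow> tsupp f \<subseteq> S \<Longrightarrow> compact (tsupp f)"
  using compact_Int_closed[of S "tsupp f"] unfolding tsupp_def by (simp add: Int_absorb1)

lemma test_fun_continuous_compact:
  assumes "\<phi> \<in> test_fun \<Omega>"
  shows "continuous_on UNIV \<phi>" "compact (tsupp \<phi>)"
  using assms unfolding test_fun_def by (auto intro: smooth_funD(2))

lemma test_fun_partial_continuous_compact:
  assumes "\<phi> \<in> test_fun \<Omega>"
  shows "continuous_on UNIV (dx b \<phi>)" "compact (tsupp (dx b \<phi>))"
    "continuous_on UNIV (dy b \<phi>)" "compact (tsupp (dy b \<phi>))"
  using assms unfolding test_fun_def dx_def dy_def
  by (auto intro: continuous_on_frechet_derivative_smooth compact_subset_tsupp[OF _ tsupp_frechet_derivative])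

lemma test_fun_compose_shear:
  assumes "\<phi> \<in> test_fun \<Omega>"
  shows "(\<lambda>z. \<phi> (shear c z)) \<in> test_fun \<Omega>"
proof -
  have smooth: "smooth_fun \<phi>" and "compact (tsupp \<phi>)" and supp: "tsupp \<phi> \<subseteq> \<Omega> \<times> UNIV"
    using assms by (auto simp: test_fun_def)
  let ?S = "shear (-c) ` tsupp \<phi>"
  have "compact ?S"
    using \<open>compact (tsupp \<phi>)\<close> continuous_on_subset[OF continuous_on_shear]
    by (blast intro: compact_continuous_image)
  moreover have "tsupp (\<lambda>z. \<phi> (shear c z)) \<subseteq> ?S"
  proof (rule tsupp_subset_closed[OF compact_imp_closed[OF \<open>compact ?S\<close>]])
    fix z assume "\<phi> (shear c z) \<noteq> 0"
    then have "shear c z \<in> tsupp \<phi>" using notin_tsupp_imp_zero by blast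
    then show "z \<in> ?S" by (rule image_eqI[rotated]) simp
  qed
  moreover have "?S \<subseteq> \<Omega> \<times> UNIV" using supp by (auto simp: shear_def)
  ultimately show ?thesis
    using smooth_fun_compose_linear[OF linear_shear smooth]
    unfolding test_fun_def by (blast intro: compact_subset_tsupp)
qed

lemma dx_compose_shear:
  assumes "smooth_fun \<phi>"
  shows "dx b (\<lambda>z. \<phi> (shear c z)) z = dx b \<phi> (shear c z) + c * dy b \<phi> (shear c z)"
proof -
  have diff: "\<phi> differentiable (at (shear c z))" by (rule smooth_fun_differentiable_at[OF assms])
  then have lin: "linear (frechet_derivative \<phi> (at (shear c z)))"
    by (meson frechet_derivative_works has_derivative_linear)
  have "frechet_derivative \<phi> (at (shear c z)) ((b, 0) + c *\<^sub>R (0, b))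
      = frechet_derivative \<phi> (at (shear c z)) (b, 0) + c * frechet_derivative \<phi> (at (shear c z)) (0, b)"
    using linear_add[OF lin, of "(b, 0)" "c *\<^sub>R (0, b)"] linear_scale[OF lin, of c "(0, b)"] by simp
  moreover have "shear c (b, 0) = (b, 0) + c *\<^sub>R (0, b)" by (simp add: shear_def)
  ultimately show ?thesis
    unfolding dx_def dy_def frechet_derivative_compose_linear[OF linear_shear diff] by simp
qed

section \<open>Lebesgue integrability\<close>

lemma Times_sets_lebesgue:
  fixes A :: "'a::euclidean_space set" and B :: "'b::euclidean_space set"
  shows "A \<in> sets borel \<Longrightarrow> B \<in> sets borel \<Longrightarrow> A \<times> B \<in> sets lebesgue"
  using borel_Times[of A B] by simp

lemma borel_measurable_lebesgue_onI: "f \<in> borel_measurable borel \<Longrightarrow> f \<in> borel_measurable (lebesgue_on A)"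
  by (rule measurable_restrict_space1) (simp add: measurable_completion measurable_lborel2)

lemma integrable_lebesgue_on_subset:
  fixes g :: "'a::euclidean_space \<Rightarrow> real"
  assumes "integrable lebesgue g" "A \<in> sets lebesgue"
  shows "integrable (lebesgue_on A) g"
  using integrable_mult_indicator[OF assms(2,1)] assms(2) by (simp add: integrable_restrict_space)

lemma integrable_lebesgue_bounded_compact_support:
  fixes g :: "'a::euclidean_space \<Rightarrow> real"
  assumes "g \<in> borel_measurable lebesgue" and "compact C"
    and "\<And>z. z \<notin> C \<Longrightarrow> g z = 0" and "\<And>z. \<bar>g z\<bar> \<le> B"
  shows "integrable lebesgue g"
proof (rule Bochner_Integration.integrable_bound)
  have "C \<in> sets lebesgue" "emeasure lebesgue C < \<infinity>"
    using lmeasurable_compact[OF \<open>compact C\<close>] by (auto simp: fmeasurable_def)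
  then show "integrable lebesgue (\<lambda>z. B * indicator C z)"
    by (intro integrable_mult_right) (simp add: integrable_indicator_iff)
  show "AE z in lebesgue. norm (g z) \<le> norm (B * indicator C z)"
    using assms(3,4) by (intro AE_I2) (smt (verit) indicator_simps mult_cancel_left1 real_norm_def)
qed (rule assms(1))

lemma integrable_mult_square_integrable:
  fixes f g :: "'a \<Rightarrow> real"
  assumes "f \<in> borel_measurable M" "g \<in> borel_measurable M"
    and "integrable M (\<lambda>x. (f x)\<^sup>2)" "integrable M (\<lambda>x. (g x)\<^sup>2)"
  shows "integrable M (\<lambda>x. f x * g x)"
proof (rule Bochner_Integration.integrable_bound)
  show "integrable M (\<lambda>x. (f x)\<^sup>2 + (g x)\<^sup>2)" using assms(3,4) by simp
  have "\<bar>a * b\<bar> \<le> a\<^sup>2 + b\<^sup>2" for a b :: real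
  proof -
    have "2 * \<bar>a\<bar> * \<bar>b\<bar> \<le> a\<^sup>2 + b\<^sup>2" using sum_squares_bound[of "\<bar>a\<bar>" "\<bar>b\<bar>"] by simp
    moreover have "0 \<le> \<bar>a\<bar> * \<bar>b\<bar>" by simp
    ultimately show ?thesis by (simp only: abs_mult)
  qed
  then show "AE x in M. norm (f x * g x) \<le> norm ((f x)\<^sup>2 + (g x)\<^sup>2)" by simp
qed (use assms(1,2) in simp)

lemma bounded_compact_tsupp:
  fixes h :: "'a::euclidean_space \<Rightarrow> real"
  assumes "continuous_on UNIV h" "compact (tsupp h)"
  obtains B where "\<And>z. \<bar>h z\<bar> \<le> B"
proof -
  have "compact (h ` tsupp h)"
    using assms by (blast intro: compact_continuous_image continuous_on_subset)
  then obtain B where B: "\<forall>y\<in>h ` tsupp h. norm y \<le> B"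
    using compact_imp_bounded bounded_iff by blast
  have "\<bar>h z\<bar> \<le> max B 0" for z
    using B notin_tsupp_imp_zero[of z h] by (cases "z \<in> tsupp h") auto
  then show thesis by (rule that)
qed

lemma square_integrable_compact_tsupp:
  fixes h :: "'a::euclidean_space \<Rightarrow> real"
  assumes "continuous_on UNIV h" "compact (tsupp h)"
  shows "integrable lebesgue (\<lambda>z. (h z)\<^sup>2)"
proof -
  obtain B where B: "\<And>z. \<bar>h z\<bar> \<le> B" using bounded_compact_tsupp[OF assms] by blast
  have "\<bar>(h z)\<^sup>2\<bar> \<le> B\<^sup>2" for z using power_mono[OF B abs_ge_zero, of z 2] by simp
  then show ?thesis
    using borel_measurable_continuous_onI[OF assms(1)] notin_tsupp_imp_zero[of _ h]
    by (intro integrable_lebesgue_bounded_compact_support[OF _ assms(2)])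
      (auto simp: measurable_completion measurable_lborel2)
qed

section \<open>Periodisation over the unit cell\<close>

definition lattice_floor :: "'a::euclidean_space \<Rightarrow> 'a" where
  "lattice_floor y = (\<Sum>b\<in>Basis. of_int \<lfloor>y \<bullet> b\<rfloor> *\<^sub>R b)"

text \<open>The measurability rules for fst and snd in the library are stated for pair measures, not
  for the Borel algebra of a product type, so the measurable method needs these two.\<close>
lemma borel_measurable_fst_euclidean [measurable (raw)]:
  fixes f :: "'c \<Rightarrow> 'a::euclidean_space \<times> 'b::euclidean_space"
  shows "f \<in> borel_measurable M \<Longrightarrow> (\<lambda>x. fst (f x)) \<in> borel_measurable M"
  using measurable_compose[OF _ borel_measurable_continuous_onI[OF continuous_on_fst[OF continuous_on_id]]] .

lemma borel_measurable_snd_euclidean [measurable (raw)]: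
  fixes f :: "'c \<Rightarrow> 'a::euclidean_space \<times> 'b::euclidean_space"
  shows "f \<in> borel_measurable M \<Longrightarrow> (\<lambda>x. snd (f x)) \<in> borel_measurable M"
  using measurable_compose[OF _ borel_measurable_continuous_onI[OF continuous_on_snd[OF continuous_on_id]]] .

lemma borel_measurable_lattice_floor [measurable]: "lattice_floor \<in> borel_measurable borel"
  unfolding lattice_floor_def by measurable

lemma inner_lattice_floor: "b \<in> Basis \<Longrightarrow> lattice_floor y \<bullet> b = of_int \<lfloor>y \<bullet> b\<rfloor>"
  by (simp add: lattice_floor_def inner_sum_left inner_Basis if_distrib[of "\<lambda>x. _ * x"] cong: if_cong)

lemma lattice_floor_in_int_lattice: "lattice_floor y \<in> int_lattice"
  by (simp add: int_lattice_def inner_lattice_floor)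

lemma lattice_floor_add: 
  assumes "k \<in> int_lattice"
  shows "lattice_floor (y + k) = lattice_floor y + k"
proof (rule euclidean_eqI)
  fix b :: 'a assume b: "b \<in> Basis"
  then obtain m :: int where m: "k \<bullet> b = of_int m"
    using assms by (auto simp: int_lattice_def Ints_def)
  have "\<lfloor>y \<bullet> b + of_int m\<rfloor> = \<lfloor>y \<bullet> b\<rfloor> + m" by simp
  then show "lattice_floor (y + k) \<bullet> b = (lattice_floor y + k) \<bullet> b"
    using b m by (simp add: inner_lattice_floor inner_add_left)
qed

lemma lattice_floor_eq_0_iff: "lattice_floor y = 0 \<longleftrightarrow> (\<forall>b\<in>Basis. 0 \<le> y \<bullet> b \<and> y \<bullet> b < 1)"
proof -
  have "lattice_floor y = 0 \<longleftrightarrow> (\<forall>b\<in>Basis. lattice_floor y \<bullet> b = 0 \<bullet> b)"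
    by (rule euclidean_eq_iff)
  then show ?thesis by (simp add: inner_lattice_floor floor_eq_iff)
qed

lemma sets_borel_lattice_floor_vimage: "lattice_floor -` {k} \<in> sets borel"
  using measurable_sets[OF borel_measurable_lattice_floor, of "{k}"] by simp

lemma finite_lattice_floor_image:
  assumes "bounded S"
  shows "finite (lattice_floor ` S)"
proof -
  obtain R where R: "\<And>y. y \<in> S \<Longrightarrow> norm y \<le> R" using assms bounded_iff by blast
  let ?M = "\<lceil>R\<rceil>"
  have "lattice_floor ` S \<subseteq> (\<lambda>m. \<Sum>b\<in>Basis. of_int (m b) *\<^sub>R b) ` (Basis \<rightarrow>\<^sub>E {-?M..?M})"
  proof (rule image_subsetI)
    fix y assume y: "y \<in> S"
    have "\<lfloor>y \<bullet> b\<rfloor> \<in> {-?M..?M}" if "b \<in> Basis" for b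
    proof -
      have "\<bar>y \<bullet> b\<bar> \<le> R" using Basis_le_norm[OF that, of y] R[OF y] by linarith
      then have "y \<bullet> b \<le> R" "-R \<le> y \<bullet> b" by linarith+
      then show ?thesis
        using floor_mono floor_le_ceiling[of R] by (fastforce simp: ceiling_def)
    qed
    then have "restrict (\<lambda>b. \<lfloor>y \<bullet> b\<rfloor>) Basis \<in> Basis \<rightarrow>\<^sub>E {-?M..?M}" by simp
    moreover have "lattice_floor y = (\<Sum>b\<in>Basis. of_int (restrict (\<lambda>b. \<lfloor>y \<bullet> b\<rfloor>) Basis b) *\<^sub>R b)"
      unfolding lattice_floor_def by (rule sum.cong) auto
    ultimately show "lattice_floor y \<in> (\<lambda>m. \<Sum>b\<in>Basis. of_int (m b) *\<^sub>R b) ` (Basis \<rightarrow>\<^sub>E {-?M..?M})"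
      by blast
  qed
  then show ?thesis by (rule finite_subset) (intro finite_imageI finite_PiE; simp)
qed

lemma lattice_floor_eq_0_imp_unit_cell: "lattice_floor y = 0 \<Longrightarrow> y \<in> unit_cell"
  by (auto simp: lattice_floor_eq_0_iff unit_cell_def mem_box less_imp_le)

lemma unit_cell_imp_lattice_floor_eq_0:
  "y \<in> unit_cell \<Longrightarrow> (\<forall>b\<in>Basis. y \<bullet> b \<noteq> 1) \<Longrightarrow> lattice_floor y = 0"
  by (auto simp: lattice_floor_eq_0_iff unit_cell_def mem_box less_le)

lemma null_sets_hyperplanes_snd:
  "{z :: 'a::euclidean_space \<times> 'a. \<exists>b\<in>Basis. snd z \<bullet> b = 1} \<in> null_sets lebesgue"
proof -
  have "{z :: 'a \<times> 'a. \<exists>b\<in>Basis. snd z \<bullet> b = 1} = (\<Union>b\<in>Basis. {z. (0, b) \<bullet> z = 1})"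
    by (auto simp: inner_prod_def inner_commute)
  moreover have "negligible {z :: 'a \<times> 'a. (0, b) \<bullet> z = 1}" if "b \<in> Basis" for b :: 'a
    using nonzero_Basis[OF that] by (intro negligible_hyperplane) (simp add: zero_prod_def)
  ultimately show ?thesis
    unfolding negligible_iff_null_sets[symmetric] by (auto intro: negligible_Union)
qed

text \<open>For y \<in> [0,1)^N only the translates y + k with k in the finite set of lattice cells met by
  the support of h can lie in the support, so this is the Y-periodisation \<Sum>_{k \<in> Z^N} h(x, y + k).\<close>
definition periodize :: "('a::euclidean_space \<times> 'a \<Rightarrow> real) \<Rightarrow> 'a \<times> 'a \<Rightarrow> real" where
  "periodize h z = (\<Sum>k\<in>lattice_floor ` snd ` tsupp h. h (fst z, snd z - lattice_floor (snd z) + k))"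

lemma periodize_add_lattice: "k \<in> int_lattice \<Longrightarrow> periodize h (x, y + k) = periodize h (x, y)"
  by (simp add: periodize_def lattice_floor_add)

lemma periodize_lattice_cell0:
  "lattice_floor y = 0 \<Longrightarrow> periodize h (x, y) = (\<Sum>k\<in>lattice_floor ` snd ` tsupp h. h (x, y + k))"
  by (simp add: periodize_def)

lemma borel_measurable_periodize:
  "h \<in> borel_measurable borel \<Longrightarrow> periodize h \<in> borel_measurable borel"
  unfolding periodize_def by (intro borel_measurable_sum, rule measurable_compose[of _ _ borel]) measurable

lemma integrable_square_periodize_unit_cell:
  fixes h :: "'a::euclidean_space \<times> 'a \<Rightarrow> real"
  assumes h: "continuous_on UNIV h" "compact (tsupp h)"
  shows "integrable lebesgue (\<lambda>z. indicator (UNIV \<times> unit_cell) z * (periodize h z)\<^sup>2)"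
proof -
  let ?K = "lattice_floor ` snd ` tsupp h"
  obtain B where B: "\<And>z. \<bar>h z\<bar> \<le> B" using bounded_compact_tsupp[OF h] by blast
  have bound: "\<bar>periodize h z\<bar> \<le> real (card ?K) * B" for z
  proof -
    have "\<bar>periodize h z\<bar> \<le> (\<Sum>k\<in>?K. \<bar>h (fst z, snd z - lattice_floor (snd z) + k)\<bar>)"
      unfolding periodize_def by (rule sum_abs)
    also have "\<dots> \<le> real (card ?K) * B" by (rule sum_bounded_above) (rule B)
    finally show ?thesis .
  qed
  have support: "z \<in> fst ` tsupp h \<times> unit_cell"
    if "indicator (UNIV \<times> unit_cell) z * (periodize h z)\<^sup>2 \<noteq> 0" for z
  proof -
    have "periodize h z \<noteq> 0" using that by auto
    then obtain k where "h (fst z, snd z - lattice_floor (snd z) + k) \<noteq> 0"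
      unfolding periodize_def by (meson sum.not_neutral_contains_not_neutral)
    then have "(fst z, snd z - lattice_floor (snd z) + k) \<in> tsupp h"
      using notin_tsupp_imp_zero by blast
    moreover have "snd z \<in> unit_cell" using that by (auto simp: indicator_def mem_Times_iff)
    ultimately show ?thesis by (cases z) force
  qed
  show ?thesis
  proof (rule integrable_lebesgue_bounded_compact_support)
    show "(\<lambda>z. indicator (UNIV \<times> unit_cell) z * (periodize h z)\<^sup>2) \<in> borel_measurable lebesgue"
      using borel_measurable_periodize[OF borel_measurable_continuous_onI[OF h(1)]]
      by (intro borel_measurable_times borel_measurable_indicator borel_measurable_power
          Times_sets_lebesgue measurable_completion) (auto simp: unit_cell_def measurable_lborel2)
    show "compact (fst ` tsupp h \<times> (unit_cell :: 'a set))"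
      unfolding unit_cell_def by (intro compact_Times compact_continuous_image continuous_intros h(2)) simp
    show "\<bar>indicator (UNIV \<times> unit_cell) z * (periodize h z)\<^sup>2\<bar> \<le> (real (card ?K) * B)\<^sup>2" for z
      using power_mono[OF bound abs_ge_zero, of z 2] by (simp add: indicator_def)
  qed (use support in blast)
qed

lemma periodize_in_L2_per:
  fixes h :: "'a::euclidean_space \<times> 'a \<Rightarrow> real"
  assumes "open \<Omega>" and h: "continuous_on UNIV h" "compact (tsupp h)"
  shows "periodize h \<in> L2_per \<Omega>"
proof -
  have "integrable (lebesgue_on (\<Omega> \<times> unit_cell)) (\<lambda>z. indicator (UNIV \<times> unit_cell) z * (periodize h z)\<^sup>2)"
    using \<open>open \<Omega>\<close> integrable_square_periodize_unit_cell[OF h]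
    by (intro integrable_lebesgue_on_subset Times_sets_lebesgue) (auto simp: unit_cell_def)
  then have "integrable (lebesgue_on (\<Omega> \<times> unit_cell)) (\<lambda>z. (periodize h z)\<^sup>2)"
    by (rule Bochner_Integration.integrable_cong[THEN iffD1, rotated 2]) (auto simp: indicator_def)
  then show ?thesis
    unfolding L2_per_def
    using borel_measurable_lebesgue_onI[OF borel_measurable_periodize[OF borel_measurable_continuous_onI[OF h(1)]]]
    by (auto simp: periodize_add_lattice)
qed

lemma square_integrable_lattice_cell0:
  fixes f :: "'a::euclidean_space \<times> 'a \<Rightarrow> real"
  assumes "open \<Omega>" and f: "f \<in> L2_per \<Omega>"
  shows "integrable (lebesgue_on (\<Omega> \<times> UNIV)) (\<lambda>z. (indicator (UNIV \<times> lattice_floor -` {0}) z * f z)\<^sup>2)"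
proof -
  let ?L = "lebesgue_on (\<Omega> \<times> UNIV)"
  let ?cell = "UNIV \<times> lattice_floor -` {0}"
  have f_sq: "integrable (lebesgue_on (\<Omega> \<times> unit_cell)) (\<lambda>z. (f z)\<^sup>2)"
    using f by (simp add: L2_per_def)
  have \<Omega>_sets: "\<Omega> \<times> UNIV \<in> sets lebesgue" "\<Omega> \<times> unit_cell \<in> sets lebesgue"
    using \<open>open \<Omega>\<close> by (auto intro!: Times_sets_lebesgue simp: unit_cell_def)
  have "integrable lebesgue (\<lambda>z. indicator (\<Omega> \<times> unit_cell) z *\<^sub>R (f z)\<^sup>2)"
    using f_sq integrable_restrict_space[of "\<Omega> \<times> unit_cell" lebesgue "\<lambda>z. (f z)\<^sup>2"] \<Omega>_sets(2) by simp
  then have sq_int: "integrable ?L (\<lambda>z. indicator (?cell) z *\<^sub>R (indicator (\<Omega> \<times> unit_cell) z *\<^sub>R (f z)\<^sup>2))"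
    using Times_sets_lebesgue[OF _ sets_borel_lattice_floor_vimage, of UNIV 0] \<Omega>_sets(1)
    by (intro integrable_lebesgue_on_subset integrable_mult_indicator[OF _ \<open>integrable lebesgue _\<close>]) simp_all
  have sq_eq: "indicator (?cell) z * (indicator (\<Omega> \<times> unit_cell) z * (f z)\<^sup>2)
      = (indicator (?cell) z * f z)\<^sup>2" if "z \<in> \<Omega> \<times> UNIV" for z
    using that lattice_floor_eq_0_imp_unit_cell[of "snd z"]
    by (cases z) (auto simp: indicator_def power2_eq_square)
  show ?thesis
    using sq_int by (rule Bochner_Integration.integrable_cong[THEN iffD1, rotated 2]) (simp_all add: sq_eq)
qed

text \<open>The cell y \<in> k + [0,1)^N is moved to the reference cell by translating by k in y, under which
  f is invariant.\<close>
lemma integral_lattice_cell_translate: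
  fixes f h :: "'a::euclidean_space \<times> 'a \<Rightarrow> real"
  assumes "open \<Omega>" and f: "f \<in> L2_per \<Omega>" and h: "continuous_on UNIV h" "compact (tsupp h)"
    and k: "k \<in> int_lattice"
  shows "integrable (lebesgue_on (\<Omega> \<times> UNIV))
      (\<lambda>z. indicator (UNIV \<times> lattice_floor -` {k}) z * (f z * h z))"
    and "integrable (lebesgue_on (\<Omega> \<times> UNIV))
      (\<lambda>z. indicator (UNIV \<times> lattice_floor -` {0}) z * (f z * h (fst z, snd z + k)))"
    and "integral\<^sup>L (lebesgue_on (\<Omega> \<times> UNIV)) (\<lambda>z. indicator (UNIV \<times> lattice_floor -` {k}) z * (f z * h z))
      = integral\<^sup>L (lebesgue_on (\<Omega> \<times> UNIV))
          (\<lambda>z. indicator (UNIV \<times> lattice_floor -` {0}) z * (f z * h (fst z, snd z + k)))"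
proof -
  let ?L = "lebesgue_on (\<Omega> \<times> UNIV)"
  let ?cell = "\<lambda>k. UNIV \<times> lattice_floor -` {k}"
  let ?h_k = "\<lambda>z. h (fst z, snd z + k)"
  let ?lhs = "\<lambda>z. indicator (?cell k) z * (f z * h z)"
  let ?rhs = "\<lambda>z. indicator (?cell 0) z * (f z * ?h_k z)"
  have f_meas: "f \<in> borel_measurable ?L"
    and f_per: "\<And>x y. x \<in> \<Omega> \<Longrightarrow> f (x, y + k) = f (x, y)"
    using f k by (auto simp: L2_per_def)
  have \<Omega>_sets: "\<Omega> \<times> UNIV \<in> sets lebesgue"
    using \<open>open \<Omega>\<close> by (auto intro!: Times_sets_lebesgue)
  have cell_sets: "?cell k' \<in> sets borel" for k'
    by (simp add: borel_Times sets_borel_lattice_floor_vimage)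
  have h_borel: "h \<in> borel_measurable borel" using h(1) by (rule borel_measurable_continuous_onI)
  have h_k_borel: "?h_k \<in> borel_measurable borel"
    by (rule measurable_compose[OF _ h_borel]) measurable
  have translate: "distr lborel borel (\<lambda>z. z + (0::'a, k)) = lborel" "(\<lambda>z. z + (0::'a, k)) \<in> borel \<rightarrow>\<^sub>M borel"
    "\<And>z. z + (0, k) \<in> \<Omega> \<times> UNIV \<longleftrightarrow> z \<in> \<Omega> \<times> UNIV"
    by (auto simp: lborel_distr_translate mem_Times_iff intro!: borel_measurable_continuous_onI continuous_intros)
  have f_sq_cell: "integrable ?L (\<lambda>z. (indicator (?cell 0) z * f z)\<^sup>2)"
    by (rule square_integrable_lattice_cell0[OF \<open>open \<Omega>\<close> f])
  have "integrable ?L (\<lambda>z. (h z)\<^sup>2)"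
    by (rule integrable_lebesgue_on_subset[OF square_integrable_compact_tsupp[OF h] \<Omega>_sets])
  then have "integrable ?L (\<lambda>z. (h (z + (0, k)))\<^sup>2)"
    using integral_lebesgue_on_measure_preserving(1)[OF translate(2,1) \<Omega>_sets translate(3)
        borel_measurable_lebesgue_onI[OF borel_measurable_power[OF h_borel]]] by simp
  then have h_k_sq: "integrable ?L (\<lambda>z. (?h_k z)\<^sup>2)" by (simp add: plus_prod_def)
  have cell_meas: "(\<lambda>z. indicator (?cell k') z :: real) \<in> borel_measurable ?L" for k'
    by (intro borel_measurable_lebesgue_onI borel_measurable_indicator cell_sets)
  have lhs_meas: "?lhs \<in> borel_measurable ?L"
    by (intro borel_measurable_times cell_meas f_meas borel_measurable_lebesgue_onI[OF h_borel])
  show rhs_int: "integrable ?L ?rhs"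
    using integrable_mult_square_integrable[OF _ _ f_sq_cell h_k_sq] by (simp add: mult.assoc
        borel_measurable_times cell_meas f_meas borel_measurable_lebesgue_onI[OF h_k_borel])
  have shift: "?lhs (z + (0, k)) = ?rhs z" if "z \<in> space ?L" for z
    using that f_per lattice_floor_add[OF k, of "snd z"] by (cases z) (auto simp: indicator_def)
  note preserving = integral_lebesgue_on_measure_preserving[OF translate(2,1) \<Omega>_sets translate(3) lhs_meas]
  have "integrable ?L (\<lambda>z. ?lhs (z + (0, k)))"
    using rhs_int by (rule Bochner_Integration.integrable_cong[THEN iffD1, rotated 2])
      (rule refl, erule shift[symmetric])
  then show "integrable ?L ?lhs" using preserving(1) by simp
  have "integral\<^sup>L ?L (\<lambda>z. ?lhs (z + (0, k))) = integral\<^sup>L ?L ?rhs"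
    by (rule Bochner_Integration.integral_cong) (rule refl, erule shift)
  then show "integral\<^sup>L ?L ?lhs = integral\<^sup>L ?L ?rhs" using preserving(2) by simp
qed

text \<open>The reference cell [0,1)^N differs from Y only by the null set of its upper faces.\<close>
lemma integral_lattice_cell0_eq_unit_cell:
  fixes g :: "'a::euclidean_space \<times> 'a \<Rightarrow> real"
  assumes "open \<Omega>" and g: "g \<in> borel_measurable (lebesgue_on (\<Omega> \<times> UNIV))"
  shows "integral\<^sup>L (lebesgue_on (\<Omega> \<times> UNIV)) (\<lambda>z. indicator (UNIV \<times> lattice_floor -` {0}) z * g z)
    = integral\<^sup>L (lebesgue_on (\<Omega> \<times> unit_cell)) g"
proof -
  let ?cell = "UNIV \<times> lattice_floor -` {0}"
  have \<Omega>_sets: "(\<Omega> \<times> UNIV) \<inter> space lebesgue \<in> sets lebesgue" "(\<Omega> \<times> unit_cell) \<inter> space lebesgue \<in> sets lebesgue"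
    using \<open>open \<Omega>\<close> by (auto intro!: Times_sets_lebesgue simp: unit_cell_def)
  have "(\<lambda>z. indicator ?cell z * g z) \<in> borel_measurable (lebesgue_on (\<Omega> \<times> UNIV))"
    by (intro borel_measurable_times[OF _ g] borel_measurable_lebesgue_onI borel_measurable_indicator)
      (simp_all add: borel_Times sets_borel_lattice_floor_vimage)
  moreover have "g \<in> borel_measurable (lebesgue_on (\<Omega> \<times> unit_cell))"
    using g by (rule measurable_restrict_mono) auto
  moreover have "AE z in lebesgue. indicator (\<Omega> \<times> UNIV) z *\<^sub>R (indicator ?cell z * g z)
      = indicator (\<Omega> \<times> unit_cell) z *\<^sub>R g z"
  proof (rule AE_I'[OF null_sets_hyperplanes_snd], rule subsetI, rule ccontr)
    fix z :: "'a \<times> 'a"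
    assume z: "z \<in> {z \<in> space lebesgue. indicator (\<Omega> \<times> UNIV) z *\<^sub>R (indicator ?cell z * g z)
      \<noteq> indicator (\<Omega> \<times> unit_cell) z *\<^sub>R g z}"
      and "z \<notin> {z. \<exists>b\<in>Basis. snd z \<bullet> b = 1}"
    then have "lattice_floor (snd z) = 0 \<longleftrightarrow> snd z \<in> unit_cell"
      using lattice_floor_eq_0_imp_unit_cell unit_cell_imp_lattice_floor_eq_0 by auto
    with z show False by (auto simp: indicator_def mem_Times_iff)
  qed
  ultimately show ?thesis
    unfolding integral_restrict_space[OF \<Omega>_sets(1)] integral_restrict_space[OF \<Omega>_sets(2)]
    by (intro integral_cong_AE) (simp_all add: borel_measurable_restrict_space_iff[OF \<Omega>_sets(1)]
        borel_measurable_restrict_space_iff[OF \<Omega>_sets(2)])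
qed

lemma integral_eq_L2_per_inner_periodize:
  fixes f h :: "'a::euclidean_space \<times> 'a \<Rightarrow> real"
  assumes "open \<Omega>" and f: "f \<in> L2_per \<Omega>" and h: "continuous_on UNIV h" "compact (tsupp h)"
  shows "integrable (lebesgue_on (\<Omega> \<times> UNIV)) (\<lambda>z. f z * h z)"
    and "integral\<^sup>L (lebesgue_on (\<Omega> \<times> UNIV)) (\<lambda>z. f z * h z) = L2_per_inner \<Omega> f (periodize h)"
proof -
  let ?L = "lebesgue_on (\<Omega> \<times> UNIV)"
  let ?K = "lattice_floor ` snd ` tsupp h"
  let ?cell = "\<lambda>k. UNIV \<times> lattice_floor -` {k}"
  have K: "finite ?K"
    using h(2) by (intro finite_lattice_floor_image bounded_linear_image compact_imp_bounded bounded_linear_snd)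
  note cell = integral_lattice_cell_translate[OF assms lattice_floor_in_int_lattice]
  have split: "(\<lambda>z. f z * h z) = (\<lambda>z. \<Sum>k\<in>?K. indicator (?cell k) z * (f z * h z))"
  proof
    fix z
    show "f z * h z = (\<Sum>k\<in>?K. indicator (?cell k) z * (f z * h z))"
    proof (cases "h z = 0")
      case False
      then have "lattice_floor (snd z) \<in> ?K" using notin_tsupp_imp_zero by blast
      then show ?thesis using K by (simp add: indicator_def mem_Times_iff)
    qed simp
  qed
  show "integrable ?L (\<lambda>z. f z * h z)"
    unfolding split by (auto intro: cell(1))
  have f_meas: "f \<in> borel_measurable ?L" using f by (simp add: L2_per_def)
  have "integral\<^sup>L ?L (\<lambda>z. f z * h z) = (\<Sum>k\<in>?K. integral\<^sup>L ?L (\<lambda>z. indicator (?cell k) z * (f z * h z)))"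
    unfolding split by (auto intro: Bochner_Integration.integral_sum cell(1))
  also have "\<dots> = (\<Sum>k\<in>?K. integral\<^sup>L ?L (\<lambda>z. indicator (?cell 0) z * (f z * h (fst z, snd z + k))))"
    by (auto intro: sum.cong cell(3))
  also have "\<dots> = integral\<^sup>L ?L (\<lambda>z. \<Sum>k\<in>?K. indicator (?cell 0) z * (f z * h (fst z, snd z + k)))"
    by (rule Bochner_Integration.integral_sum[symmetric]) (auto intro: cell(2))
  also have "\<dots> = integral\<^sup>L ?L (\<lambda>z. indicator (?cell 0) z * (f z * periodize h z))"
    by (intro Bochner_Integration.integral_cong)
      (auto simp: periodize_lattice_cell0 indicator_def sum_distrib_left case_prod_unfold)
  also have "\<dots> = integral\<^sup>L (lebesgue_on (\<Omega> \<times> unit_cell)) (\<lambda>z. f z * periodize h z)"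
    using borel_measurable_periodize[OF borel_measurable_continuous_onI[OF h(1)]]
    by (intro integral_lattice_cell0_eq_unit_cell \<open>open \<Omega>\<close> borel_measurable_times[OF f_meas]
        borel_measurable_lebesgue_onI)
  finally show "integral\<^sup>L ?L (\<lambda>z. f z * h z) = L2_per_inner \<Omega> f (periodize h)"
    by (simp add: L2_per_inner_def)
qed

lemma tendsto_integral_L2_per_weak_conv:
  fixes h :: "'a::euclidean_space \<times> 'a \<Rightarrow> real"
  assumes "open \<Omega>" and conv: "L2_per_weak_conv \<Omega> f g" and h: "continuous_on UNIV h" "compact (tsupp h)"
  shows "(\<lambda>n. integral\<^sup>L (lebesgue_on (\<Omega> \<times> UNIV)) (\<lambda>z. f n z * h z))
    \<longlonglongrightarrow> integral\<^sup>L (lebesgue_on (\<Omega> \<times> UNIV)) (\<lambda>z. g z * h z)"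
  using conv periodize_in_L2_per[OF assms(1) h]
  by (simp add: L2_per_weak_conv_def integral_eq_L2_per_inner_periodize(2)[OF assms(1) _ h])

section \<open>The two-scale limit\<close>

text \<open>Testing \<nabla>_x u against \<phi> \<circ> shear (1/\<epsilon>) and undoing the shear, which turns u into F_\<epsilon> u.\<close>
lemma F_eps_grad_x_identity:
  fixes u :: "'a::euclidean_space \<times> 'a \<Rightarrow> real" and g :: "'a \<times> 'a \<Rightarrow> 'a"
  assumes "open \<Omega>" and \<phi>: "\<phi> \<in> test_fun \<Omega>" and b: "b \<in> Basis" and "\<epsilon> > 0"
    and Fu: "F_eps \<epsilon> u \<in> L2_per \<Omega>" and Fg: "F_eps \<epsilon> (\<lambda>z. \<epsilon> * (g z \<bullet> b)) \<in> L2_per \<Omega>"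
    and grad: "is_grad_x \<Omega> u g"
  shows "\<epsilon> * integral\<^sup>L (lebesgue_on (\<Omega> \<times> UNIV)) (\<lambda>z. F_eps \<epsilon> u z * dx b \<phi> z)
       + integral\<^sup>L (lebesgue_on (\<Omega> \<times> UNIV)) (\<lambda>z. F_eps \<epsilon> u z * dy b \<phi> z)
       = - integral\<^sup>L (lebesgue_on (\<Omega> \<times> UNIV)) (\<lambda>z. F_eps \<epsilon> (\<lambda>z. \<epsilon> * (g z \<bullet> b)) z * \<phi> z)"
proof -
  let ?L = "lebesgue_on (\<Omega> \<times> UNIV)"
  let ?S = "shear (inverse \<epsilon>)"
  let ?Fg = "F_eps \<epsilon> (\<lambda>z. \<epsilon> * (g z \<bullet> b))"
  note \<phi>_cont = test_fun_continuous_compact[OF \<phi>] test_fun_partial_continuous_compact[OF \<phi>, of b]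
  have "\<Omega> \<times> UNIV \<in> sets lebesgue"
    using \<open>open \<Omega>\<close> by (intro Times_sets_lebesgue) auto
  note change_vars = integral_lebesgue_on_measure_preserving[OF borel_measurable_shear lborel_distr_shear this]
  have S_\<Omega>: "?S z \<in> \<Omega> \<times> UNIV \<longleftrightarrow> z \<in> \<Omega> \<times> UNIV" for z by (simp add: shear_def mem_Times_iff)
  have F_S: "F_eps \<epsilon> u (?S z) = u z" "?Fg (?S z) = \<epsilon> * (g z \<bullet> b)" for z
    using \<open>\<epsilon> > 0\<close> by (simp_all add: F_eps_def shear_def)
  have meas: "(\<lambda>z. F_eps \<epsilon> u z * \<psi> z) \<in> borel_measurable ?L" "(\<lambda>z. ?Fg z * \<psi> z) \<in> borel_measurable ?L"
    if "continuous_on UNIV \<psi>" for \<psi>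
    using Fu Fg borel_measurable_lebesgue_onI[OF borel_measurable_continuous_onI[OF that]]
    unfolding L2_per_def by (auto intro: borel_measurable_times)
  have sheared: "integral\<^sup>L ?L (\<lambda>z. F_eps \<epsilon> u z * \<psi> z) = integral\<^sup>L ?L (\<lambda>z. u z * \<psi> (?S z))"
    "integrable ?L (\<lambda>z. u z * \<psi> (?S z))"
    if "continuous_on UNIV \<psi>" "compact (tsupp \<psi>)" for \<psi>
    using change_vars[OF S_\<Omega> meas(1)[OF that(1)]] integral_eq_L2_per_inner_periodize(1)[OF \<open>open \<Omega>\<close> Fu that]
    by (simp_all add: F_S)
  have "integral\<^sup>L ?L (\<lambda>z. ?Fg z * \<phi> z) = \<epsilon> * integral\<^sup>L ?L (\<lambda>z. (g z \<bullet> b) * \<phi> (?S z))"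
    using change_vars(2)[OF S_\<Omega> meas(2)[OF \<phi>_cont(1)]] by (simp add: F_S mult.assoc)
  also have "integral\<^sup>L ?L (\<lambda>z. (g z \<bullet> b) * \<phi> (?S z)) = - integral\<^sup>L ?L (\<lambda>z. u z * dx b (\<lambda>z. \<phi> (?S z)) z)"
    using grad test_fun_compose_shear[OF \<phi>] b unfolding is_grad_x_def by simp
  also have "integral\<^sup>L ?L (\<lambda>z. u z * dx b (\<lambda>z. \<phi> (?S z)) z)
      = integral\<^sup>L ?L (\<lambda>z. u z * dx b \<phi> (?S z)) + inverse \<epsilon> * integral\<^sup>L ?L (\<lambda>z. u z * dy b \<phi> (?S z))"
    using \<phi> sheared(2)[OF \<phi>_cont(3,4)] sheared(2)[OF \<phi>_cont(5,6)]
    by (simp add: dx_compose_shear test_fun_def algebra_simps)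
  finally have "integral\<^sup>L ?L (\<lambda>z. ?Fg z * \<phi> z) = - (\<epsilon> * integral\<^sup>L ?L (\<lambda>z. u z * dx b \<phi> (?S z)))
      - (\<epsilon> * inverse \<epsilon>) * integral\<^sup>L ?L (\<lambda>z. u z * dy b \<phi> (?S z))"
    by (simp add: algebra_simps)
  then show ?thesis
    using \<open>\<epsilon> > 0\<close> by (simp add: sheared \<phi>_cont)
qed

theorem mainTheorem4:
  fixes \<Omega> :: "'a::euclidean_space set"
    and e :: "nat \<Rightarrow> real"
    and u :: "nat \<Rightarrow> 'a \<times> 'a \<Rightarrow> real"
    and gu :: "nat \<Rightarrow> 'a \<times> 'a \<Rightarrow> 'a"
    and u0 :: "'a \<times> 'a \<Rightarrow> real"
    and v :: "'a \<times> 'a \<Rightarrow> 'a"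
  assumes "open \<Omega>"
    and "\<And>n. e n > 0" and "e \<longlonglongrightarrow> 0"
    and "\<And>n. u n \<in> H1_per \<Omega>"
    and "\<And>n. (\<forall>b\<in>Basis. (\<lambda>z. gu n z \<bullet> b) \<in> L2_per \<Omega>) \<and> is_grad_x \<Omega> (u n) (gu n)"
    and "L2_per_weak_conv \<Omega> (\<lambda>n. F_eps (e n) (u n)) u0"
    and "\<And>b. b \<in> Basis \<Longrightarrow>
           L2_per_weak_conv \<Omega> (\<lambda>n. F_eps (e n) (\<lambda>z. e n * (gu n z \<bullet> b))) (\<lambda>z. v z \<bullet> b)"
  shows "is_grad_y \<Omega> u0 v"
  unfolding is_grad_y_def
proof (intro ballI)
  fix \<phi> :: "'a \<times> 'a \<Rightarrow> real" and b :: 'a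
  assume \<phi>: "\<phi> \<in> test_fun \<Omega>" and b: "b \<in> Basis"
  let ?L = "lebesgue_on (\<Omega> \<times> (UNIV :: 'a set))"
  note \<phi>_cont = test_fun_continuous_compact[OF \<phi>] test_fun_partial_continuous_compact[OF \<phi>, of b]
  define X where "X n = integral\<^sup>L ?L (\<lambda>z. F_eps (e n) (u n) z * dx b \<phi> z)" for n
  define Y where "Y n = integral\<^sup>L ?L (\<lambda>z. F_eps (e n) (u n) z * dy b \<phi> z)" for n
  define Z where "Z n = integral\<^sup>L ?L (\<lambda>z. F_eps (e n) (\<lambda>z. e n * (gu n z \<bullet> b)) z * \<phi> z)" for n
  have "e n * X n + Y n = - Z n" for n
    unfolding X_def Y_def Z_def
    using assms(6) assms(7)[OF b] assms(5)[of n] unfolding L2_per_weak_conv_def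
    by (intro F_eps_grad_x_identity[OF assms(1) \<phi> b assms(2)]) auto
  then have "Y = (\<lambda>n. - Z n - e n * X n)" by (auto simp: algebra_simps)
  also have "\<dots> \<longlonglongrightarrow> - integral\<^sup>L ?L (\<lambda>z. (v z \<bullet> b) * \<phi> z) - 0 * integral\<^sup>L ?L (\<lambda>z. u0 z * dx b \<phi> z)"
    unfolding X_def Z_def
    by (intro tendsto_intros assms(3) tendsto_integral_L2_per_weak_conv[OF assms(1)] assms(6) assms(7)[OF b] \<phi>_cont)
  finally have "Y \<longlonglongrightarrow> - integral\<^sup>L ?L (\<lambda>z. (v z \<bullet> b) * \<phi> z)" by simp
  moreover have "Y \<longlonglongrightarrow> integral\<^sup>L ?L (\<lambda>z. u0 z * dy b \<phi> z)"
    unfolding Y_def by (rule tendsto_integral_L2_per_weak_conv[OF assms(1,6) \<phi>_cont(5,6)])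
  ultimately show "integral\<^sup>L ?L (\<lambda>z. u0 z * dy b \<phi> z) = - integral\<^sup>L ?L (\<lambda>z. (v z \<bullet> b) * \<phi> z)"
    using LIMSEQ_unique by blast
qed

end
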